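(* Let $n\ge1$ and let $\mathcal I^G$ be an imaginarity measure of $n$-mode Gaussian states. Define, for every $n$-mode Gaussian channel $\phi$, $$\mathcal I_s^{GC}(\phi):=\sup_{\rho\in\mathcal{RGS}_n}\mathcal I^G(\phi(\rho)).$$ Then $\mathcal I_s^{GC}$ is an imaginarity measure for Gaussian channels, i.e.: (GC1) $\mathcal I_s^{GC}(\phi)\ge0$ for every $n$-mode Gaussian channel $\phi$, with $\mathcal I_s^{GC}(\phi)=0$ if and only if $\phi$ is a real Gaussian channel; and (GC2) $\mathcal I_s^{GC}(\Phi(\phi))\le\mathcal I_s^{GC}(\phi)$ for every $n$-mode real Gaussian superchannel $\Phi$ and every $n$-mode Gaussian channel $\phi$.
   Context: Consider $n$ bosonic modes, $H=H_1\otimes\cdots\otimes H_n$ with Fock bases, and quadrature operators $\hat Q_k=\hat a_k+\hat a_k^\dagger$, $\hat P_k=-i(\hat a_k-\hat a_k^\dagger)$, $R=(\hat Q_1,\hat P_1,\dots,\hat Q_n,\hat P_n)$. A state $\rho$ is Gaussian with displacement vector $\bar{\mathbf d}_0\in\mathbb R^{2n}$ and covariance matrix $\nu$ (real symmetric $2n\times2n$, $\nu+i\Delta_n\ge0$) if $\mathrm{Tr}(\rho\, e^{iR^{\mathrm T}z})=\exp(-\tfrac12 z^{\mathrm T}\nu z+i\bar{\mathbf d}_0^{\mathrm T}z)$ for all $z\in\mathbb R^{2n}$. A Gaussian state is real if all its matrix entries in the $n$-mode Fock basis are real; $\mathcal{RGS}_n$ denotes the set of real $n$-mode Gaussian states.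 Let $\Delta_n=\bigoplus_{k=1}^n\begin{pmatrix}0&1\\-1&0\end{pmatrix}$, $\Sigma_n=\bigoplus_{k=1}^n\mathrm{diag}(1,-1)$. An $n$-mode Gaussian channel $\phi=\phi(T,N,\mathbf d)$ (real $2n\times2n$ $T$, $N=N^{\mathrm T}\ge0$, $\mathbf d\in\mathbb R^{2n}$, $N+i\Delta_n-iT\Delta_nT^{\mathrm T}\ge0$) maps the Gaussian state with $(\bar{\mathbf d}_0,\nu)$ to the Gaussian state with $(T\bar{\mathbf d}_0+\mathbf d,\ T\nu T^{\mathrm T}+N)$. A Gaussian channel is real if it maps real Gaussian states to real Gaussian states; it is known that this holds iff $d_{2k}=0$, $n_{2k-1,2l}=0$ for all $k,l$, and either $t_{2k,2l-1}=t_{2k,2l}=0$ for all $k,l$ or $t_{2k-1,2l}=t_{2k,2l-1}=0$ for all $k,l$. An $n$-mode Gaussian superchannel $\Phi(A,O,Y,\bar{\mathbf d})$ (real $2n\times 2n$ $A,O,Y$, $Y=Y^{\mathrm T}$, $OO^{\mathrm T}=I$, $Y+i\Delta_n-iA\Delta_nA^{\mathrm T}\ge0$, $i\Delta_n-iO\Delta_nO^{\mathrm T}\ge0$, $\bar{\mathbf d}\in\mathbb R^{2n}$) acts by $\Phi(\phi(T,N,\mathbf d))=\phi(AT\Sigma_nO^{\mathrm T}\Sigma_n,\,ANA^{\mathrm T}+Y,\,A\mathbf d+\bar{\mathbf d})$; equivalently $\Phi(\phi)=\phi_2\circ\phi\circ\phi_1$ with $\phi_1=\phi(\Sigma_nO^{\mathrm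 T}\Sigma_n,0,0)$, $\phi_2=\phi(A,Y,\bar{\mathbf d})$. It is real if it maps real Gaussian channels to real Gaussian channels. An imaginarity measure of $n$-mode Gaussian states is a map $\mathcal I^G$ from $n$-mode Gaussian states to $[0,\infty)$ such that $\mathcal I^G(\rho)=0$ iff $\rho$ is real, and $\mathcal I^G(\phi(\rho))\le\mathcal I^G(\rho)$ for all real Gaussian channels $\phi$ and all Gaussian states $\rho$. *)

theory Defs
  imports "HOL-Analysis.Analysis"
begin

text \<open>The n modes are indexed by a finite type 'n (so n = CARD('n) \<ge> 1).
  The 2n quadrature coordinates are indexed by 'n \<times> bool: (k, False) is the
  position quadrature Q_k (paper index 2k-1) and (k, True) is the momentum
  quadrature P_k (paper index 2k).\<close>

type_synonym 'n rvec = "real ^ ('n \<times> bool)"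
type_synonym 'n rmat = "real ^ ('n \<times> bool) ^ ('n \<times> bool)"
type_synonym 'n cmat = "complex ^ ('n \<times> bool) ^ ('n \<times> bool)"

text \<open>A Gaussian state is represented by its (displacement vector, covariance matrix).\<close>
type_synonym 'n gstate = "'n rvec \<times> 'n rmat"
text \<open>A Gaussian channel phi(T, N, d).\<close>
type_synonym 'n gchan = "'n rmat \<times> 'n rmat \<times> 'n rvec"
text \<open>A Gaussian superchannel Phi(A, O, Y, dbar).\<close>
type_synonym 'n gsuper = "'n rmat \<times> 'n rmat \<times> 'n rmat \<times> 'n rvec"

definition Delta :: "'n::finite rmat" where
  "Delta = (\<chi> i j. if fst i = fst j \<and> \<not> snd i \<and> snd j then 1
                   else if fst i = fst j \<and> snd i \<and> \<not> snd j then -1 else 0)"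

definition Sigma :: "'n::finite rmat" where
  "Sigma = (\<chi> i j. if i = j then (if snd i then -1 else 1) else 0)"

definition psd_c :: "complex ^ 'm ^ 'm \<Rightarrow> bool" where
  "psd_c M \<longleftrightarrow> (\<forall>v :: complex ^ 'm.
     Im (\<Sum>i\<in>UNIV. \<Sum>j\<in>UNIV. cnj (v $ i) * M $ i $ j * v $ j) = 0 \<and>
     Re (\<Sum>i\<in>UNIV. \<Sum>j\<in>UNIV. cnj (v $ i) * M $ i $ j * v $ j) \<ge> 0)"

definition psd_r :: "real ^ 'm ^ 'm \<Rightarrow> bool" where
  "psd_r M \<longleftrightarrow> (\<forall>x :: real ^ 'm. x \<bullet> (M *v x) \<ge> 0)"

definition cplx :: "real ^ 'm ^ 'm \<Rightarrow> real ^ 'm ^ 'm \<Rightarrow> complex ^ 'm ^ 'm" where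
  "cplx X Y = (\<chi> i j. Complex (X $ i $ j) (Y $ i $ j))"

definition gaussian_state :: "'n::finite gstate \<Rightarrow> bool" where
  "gaussian_state \<rho> \<longleftrightarrow> (case \<rho> of (d0, \<nu>) \<Rightarrow>
      transpose \<nu> = \<nu> \<and> psd_c (cplx \<nu> Delta))"

text \<open>Real Gaussian state (all Fock-basis matrix entries real), expressed through the
  moments.\<close>
definition real_gstate :: "'n::finite gstate \<Rightarrow> bool" where
  "real_gstate \<rho> \<longleftrightarrow> (case \<rho> of (d0, \<nu>) \<Rightarrow>
      (\<forall>k. d0 $ (k, True) = 0) \<and> (\<forall>k l. \<nu> $ (k, False) $ (l, True) = 0))"

definition gchannel :: "'n::finite gchan \<Rightarrow> bool" where
  "gchannel \<phi> \<longleftrightarrow> (case \<phi> of (T, N, d) \<Rightarrow>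
      transpose N = N \<and> psd_r N \<and>
      psd_c (cplx N (Delta - T ** Delta ** transpose T)))"

definition apply_ch :: "'n::finite gchan \<Rightarrow> 'n gstate \<Rightarrow> 'n gstate" where
  "apply_ch \<phi> \<rho> = (case \<phi> of (T, N, d) \<Rightarrow> case \<rho> of (d0, \<nu>) \<Rightarrow>
      (T *v d0 + d, T ** \<nu> ** transpose T + N))"

definition real_gchannel :: "'n::finite gchan \<Rightarrow> bool" where
  "real_gchannel \<phi> \<longleftrightarrow> gchannel \<phi> \<and>
     (\<forall>\<rho>. gaussian_state \<rho> \<and> real_gstate \<rho> \<longrightarrow> real_gstate (apply_ch \<phi> \<rho>))"

definition gsuperchannel :: "'n::finite gsuper \<Rightarrow> bool" where
  "gsuperchannel \<Phi> \<longleftrightarrow> (case \<Phi> of (A, Or, Y, db) \<Rightarrow>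
      transpose Y = Y \<and> Or ** transpose Or = mat 1 \<and>
      psd_c (cplx Y (Delta - A ** Delta ** transpose A)) \<and>
      psd_c (cplx 0 (Delta - Or ** Delta ** transpose Or)))"

definition apply_super :: "'n::finite gsuper \<Rightarrow> 'n gchan \<Rightarrow> 'n gchan" where
  "apply_super \<Phi> \<phi> = (case \<Phi> of (A, Or, Y, db) \<Rightarrow> case \<phi> of (T, N, d) \<Rightarrow>
      (A ** T ** Sigma ** transpose Or ** Sigma, A ** N ** transpose A + Y, A *v d + db))"

definition real_gsuperchannel :: "'n::finite gsuper \<Rightarrow> bool" where
  "real_gsuperchannel \<Phi> \<longleftrightarrow> gsuperchannel \<Phi> \<and>
     (\<forall>\<phi>. real_gchannel \<phi> \<longrightarrow> real_gchannel (apply_super \<Phi> \<phi>))"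

definition imaginarity_measure :: "('n::finite gstate \<Rightarrow> real) \<Rightarrow> bool" where
  "imaginarity_measure IG \<longleftrightarrow>
     (\<forall>\<rho>. gaussian_state \<rho> \<longrightarrow> IG \<rho> \<ge> 0 \<and> (IG \<rho> = 0 \<longleftrightarrow> real_gstate \<rho>)) \<and>
     (\<forall>\<phi> \<rho>. real_gchannel \<phi> \<and> gaussian_state \<rho> \<longrightarrow> IG (apply_ch \<phi> \<rho>) \<le> IG \<rho>)"

definition IGC_s :: "('n::finite gstate \<Rightarrow> real) \<Rightarrow> 'n gchan \<Rightarrow> ereal" where
  "IGC_s IG \<phi> = (SUP \<rho> \<in> {\<rho>. gaussian_state \<rho> \<and> real_gstate \<rho>}. ereal (IG (apply_ch \<phi> \<rho>)))"

end

theory Submission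
  imports Defs
begin

text \<open>
  GC1: the supremum ranges over a nonempty set of nonnegative numbers, and it vanishes exactly
  when every real Gaussian input is mapped to a real state.

  GC2: write \<open>\<Phi>(\<phi>) = \<phi>\<^sub>2 \<circ> \<phi> \<circ> \<phi>\<^sub>1\<close>. Feeding \<open>\<Phi>\<close> the real replacement channels
  \<open>(0, I + w w\<^sup>T, x)\<close> shows that no momentum output of \<open>A\<close> depends on a position and that
  \<open>(A w)\<^sub>Q (A w)\<^sub>P = 0\<close> for every momentum vector \<open>w\<close>. Hence either the momentum rows of \<open>A\<close>
  vanish, and then \<open>\<phi>\<^sub>2\<close> outputs only real states, or \<open>A\<close> is block diagonal. In the latter case
  a second real test channel shows that \<open>O\<close> maps no momentum to a position, so by orthogonality
  \<open>O\<close>, and with it \<open>\<phi>\<^sub>1\<close>, is block diagonal; then \<open>\<phi>\<^sub>1\<close> and \<open>\<phi>\<^sub>2\<close> are real and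
  \<open>\<I>(\<phi>\<^sub>2(\<phi>(\<phi>\<^sub>1 \<rho>))) \<le> \<I>(\<phi>(\<phi>\<^sub>1 \<rho>)) \<le> \<I>\<^sub>s(\<phi>)\<close>.
\<close>

lemma transpose_add: "transpose (X + Y) = transpose X + transpose (Y :: 'a::semiring_1 ^ 'n ^ 'm)"
  by (simp add: transpose_def vec_eq_iff)

lemma transpose_zero [simp]: "transpose (0 :: 'a::zero ^ 'n ^ 'm) = 0"
  by (simp add: transpose_def vec_eq_iff)

lemma matrix_add_rdistrib: "(A + B) ** C = A ** C + B ** (C :: 'a::semiring_1 ^ 'n ^ 'm)"
  by (simp add: matrix_matrix_mult_def vec_eq_iff sum.distrib distrib_right)

lemma matrix_diff_ldistrib: "A ** (B - C) = A ** B - A ** (C :: 'a::ring_1 ^ 'n ^ 'm)"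
  by (simp add: matrix_matrix_mult_def vec_eq_iff sum_subtractf right_diff_distrib)

lemma matrix_diff_rdistrib: "(A - B) ** C = A ** C - B ** (C :: 'a::ring_1 ^ 'n ^ 'm)"
  by (simp add: matrix_matrix_mult_def vec_eq_iff sum_subtractf left_diff_distrib)

lemma matrix_mul_lneg: "(- A) ** B = - (A ** (B :: 'a::ring_1 ^ 'n ^ 'm))"
  by (simp add: matrix_matrix_mult_def vec_eq_iff sum_negf)

lemma matrix_mul_rneg: "A ** (- B) = - (A ** (B :: 'a::ring_1 ^ 'n ^ 'm))"
  by (simp add: matrix_matrix_mult_def vec_eq_iff sum_negf)

lemma mult_if_zero: "x * (if P then y else 0) = (if P then x * y else (0 :: 'a::mult_zero))"
  by simp

lemma if_zero_mult: "(if P then y else 0) * x = (if P then y * x else (0 :: 'a::mult_zero))"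
  by simp

lemma matrix_congruence_entry:
  "(M ** X ** transpose M') $ a $ b = (\<Sum>i\<in>UNIV. \<Sum>j\<in>UNIV. M $ a $ i * X $ i $ j * M' $ b $ j)"
  by (simp add: matrix_matrix_mult_def transpose_def sum_distrib_right) (rule sum.swap)

lemma sum_UNIV_prod_bool:
  "(\<Sum>i\<in>UNIV. f i) = (\<Sum>k\<in>UNIV. f (k, False) + f (k, True) :: 'a::comm_monoid_add)"
  by (simp add: UNIV_Times_UNIV[symmetric] sum.cartesian_product' UNIV_bool add.commute)

lemma inner_mult_inner_eq_0_imp_eq_0:
  fixes u v :: "'a::real_inner"
  assumes uv: "\<And>w. (u \<bullet> w) * (v \<bullet> w) = 0" and "v \<noteq> 0"
  shows "u = 0"
proof -
  have "(u \<bullet> v) * (v \<bullet> v) = 0" using uv by blast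
  then have "u \<bullet> v = 0" using \<open>v \<noteq> 0\<close> by simp
  moreover have "(u \<bullet> (u + v)) * (v \<bullet> (u + v)) = 0" using uv by blast
  ultimately have "(u \<bullet> u) * (v \<bullet> v) = 0" by (simp add: inner_add_right inner_commute)
  then show ?thesis using \<open>v \<noteq> 0\<close> by simp
qed

text \<open>The rows and the columns indexed by \<open>-X\<close> carry the same total squared mass \<open>card (-X)\<close>;
  as the block \<open>X \<times> -X\<close> vanishes, so must the block \<open>-X \<times> X\<close>.\<close>

lemma orthogonal_matrix_block_triangular_imp_diagonal:
  fixes Q :: "real ^ 'm ^ 'm"
  assumes "orthogonal_matrix Q" and upper: "\<And>i j. i \<in> X \<Longrightarrow> j \<notin> X \<Longrightarrow> Q $ i $ j = 0"
    and "i \<notin> X" "j \<in> X"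
  shows "Q $ i $ j = 0"
proof -
  let ?sq = "\<lambda>i j. (Q $ i $ j)\<^sup>2"
  have rows: "(\<Sum>j\<in>UNIV. ?sq i j) = 1" for i
  proof -
    have "(Q ** transpose Q) $ i $ i = 1" using \<open>orthogonal_matrix Q\<close>
      by (simp add: orthogonal_matrix_def mat_def)
    then show ?thesis by (simp add: matrix_matrix_mult_def transpose_def power2_eq_square)
  qed
  have cols: "(\<Sum>i\<in>UNIV. ?sq i j) = 1" for j
  proof -
    have "(transpose Q ** Q) $ j $ j = 1" using \<open>orthogonal_matrix Q\<close>
      by (simp add: orthogonal_matrix_def mat_def)
    then show ?thesis by (simp add: matrix_matrix_mult_def transpose_def power2_eq_square)
  qed
  have split: "(\<Sum>j\<in>UNIV. f j) = (\<Sum>j\<in>X. f j) + (\<Sum>j\<in>-X. f j)" for f :: "'m \<Rightarrow> real"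
    using sum.Int_Diff[of UNIV f X] by (simp add: Compl_eq_Diff_UNIV)
  have "(\<Sum>i\<in>-X. \<Sum>j\<in>X. ?sq i j) + (\<Sum>i\<in>-X. \<Sum>j\<in>-X. ?sq i j) = (\<Sum>i\<in>-X. \<Sum>j\<in>UNIV. ?sq i j)"
    by (simp only: split sum.distrib)
  also have "\<dots> = (\<Sum>j\<in>-X. \<Sum>i\<in>UNIV. ?sq i j)"
    by (simp only: rows cols)
  also have "\<dots> = (\<Sum>i\<in>-X. \<Sum>j\<in>-X. ?sq i j)"
    by (subst sum.swap) (simp add: split upper)
  finally have "(\<Sum>i\<in>-X. \<Sum>j\<in>X. ?sq i j) = 0" by simp
  then have "?sq i j = 0"
    using \<open>i \<notin> X\<close> \<open>j \<in> X\<close> by (simp add: sum_nonneg_eq_0_iff sum_nonneg)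
  then show ?thesis by simp
qed

definition herm_form :: "complex ^ 'm ^ 'm \<Rightarrow> complex ^ 'm \<Rightarrow> complex" where
  "herm_form Z v = (\<Sum>i\<in>UNIV. \<Sum>j\<in>UNIV. cnj (v $ i) * Z $ i $ j * v $ j)"

lemma psd_c_iff_herm_form: "psd_c Z \<longleftrightarrow> (\<forall>v. Im (herm_form Z v) = 0 \<and> 0 \<le> Re (herm_form Z v))"
  by (simp add: psd_c_def herm_form_def)

lemma herm_form_eq_sum: "herm_form Z v = (\<Sum>i\<in>UNIV. cnj (v $ i) * (Z *v v) $ i)"
  by (simp add: herm_form_def matrix_vector_mult_def sum_distrib_left mult.assoc)

lemma herm_form_congruence:
  fixes M :: "real ^ 'k ^ 'm" and Z :: "complex ^ 'k ^ 'k"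
  shows "herm_form (\<chi> i j. \<Sum>k\<in>UNIV. \<Sum>l\<in>UNIV. of_real (M $ i $ k) * Z $ k $ l * of_real (M $ j $ l)) v
       = herm_form Z (\<chi> k. \<Sum>i\<in>UNIV. of_real (M $ i $ k) * v $ i)"
proof -
  have "herm_form (\<chi> i j. \<Sum>k\<in>UNIV. \<Sum>l\<in>UNIV. of_real (M $ i $ k) * Z $ k $ l * of_real (M $ j $ l)) v
      = (\<Sum>i\<in>UNIV. \<Sum>j\<in>UNIV. \<Sum>k\<in>UNIV. \<Sum>l\<in>UNIV.
           cnj (v $ i) * of_real (M $ i $ k) * Z $ k $ l * of_real (M $ j $ l) * v $ j)"
    by (simp add: herm_form_def sum_distrib_left sum_distrib_right mult.assoc)
  also have "\<dots> = (\<Sum>k\<in>UNIV. \<Sum>l\<in>UNIV. \<Sum>i\<in>UNIV. \<Sum>j\<in>UNIV.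
           cnj (v $ i) * of_real (M $ i $ k) * Z $ k $ l * of_real (M $ j $ l) * v $ j)"
    by (simp only: sum.cartesian_product)
      (rule sum.reindex_bij_witness[where i = "\<lambda>(k, l, i, j). (i, j, k, l)"
          and j = "\<lambda>(i, j, k, l). (k, l, i, j)"], auto)
  also have "\<dots> = herm_form Z (\<chi> k. \<Sum>i\<in>UNIV. of_real (M $ i $ k) * v $ i)"
    by (simp add: herm_form_def sum_distrib_left sum_distrib_right mult_ac)
  finally show ?thesis .
qed

lemma cplx_entry: "cplx X Y $ i $ j = of_real (X $ i $ j) + \<i> * of_real (Y $ i $ j)"
  by (simp add: cplx_def Complex_eq)

lemma psd_c_cplx_add:
  assumes "psd_c (cplx X Y)" and "psd_c (cplx X' Y')"
  shows "psd_c (cplx (X + X') (Y + Y'))"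
proof -
  have "cplx (X + X') (Y + Y') $ i $ j = cplx X Y $ i $ j + cplx X' Y' $ i $ j" for i j
    by (simp add: cplx_def complex_eq_iff)
  then show ?thesis
    using assms unfolding psd_c_def by (simp add: distrib_left distrib_right sum.distrib)
qed

lemma psd_r_if_psd_c_cplx:
  fixes X Y :: "real ^ 'm ^ 'm"
  assumes "psd_c (cplx X Y)"
  shows "psd_r X"
  unfolding psd_r_def
proof
  fix x :: "real ^ 'm"
  have "0 \<le> Re (herm_form (cplx X Y) (\<chi> k. of_real (x $ k)))"
    using assms unfolding psd_c_iff_herm_form by blast
  also have "\<dots> = x \<bullet> (X *v x)"
    by (simp add: herm_form_def Re_sum inner_vec_def matrix_vector_mult_def sum_distrib_left
        cplx_def mult.assoc)
  finally show "0 \<le> x \<bullet> (X *v x)" .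
qed

lemma psd_c_cplx_congruence:
  fixes M :: "real ^ 'k ^ 'm"
  assumes "psd_c (cplx X Y)"
  shows "psd_c (cplx (M ** X ** transpose M) (M ** Y ** transpose M))"
proof -
  have congr: "cplx (M ** X ** transpose M) (M ** Y ** transpose M)
      = (\<chi> i j. \<Sum>k\<in>UNIV. \<Sum>l\<in>UNIV. of_real (M $ i $ k) * cplx X Y $ k $ l * of_real (M $ j $ l))"
    by (simp add: vec_eq_iff cplx_entry matrix_congruence_entry of_real_sum sum_distrib_left
        sum_distrib_right distrib_left distrib_right sum.distrib mult_ac)
  show ?thesis
    using assms unfolding psd_c_iff_herm_form congr herm_form_congruence by blast
qed

lemma cplx_vacuum_mult:
  "(cplx (mat 1) (Delta :: 'n::finite rmat) *v v) $ (k, b) =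
     v $ (k, b) + (if b then - \<i> else \<i>) * v $ (k, \<not> b)"
proof -
  have entry: "cplx (mat 1) (Delta :: 'n rmat) $ (k, b) $ (l, c) * x =
      (if l = k then (if b = c then x else if c then \<i> * x else - \<i> * x) else 0)" for b l c x
    by (auto simp: cplx_def Delta_def mat_def complex_eq_iff)
  show ?thesis
    by (cases b) (simp_all add: matrix_vector_mult_def sum_UNIV_prod_bool entry sum.distrib)
qed

text \<open>\<open>I + i\<Delta>\<close> is a sum over the modes of the rank-one blocks \<open>u u\<^sup>*\<close> with \<open>u = (1, -i)\<close>.\<close>

lemma psd_c_vacuum: "psd_c (cplx (mat 1) (Delta :: 'n::finite rmat))"
proof -
  have "herm_form (cplx (mat 1) (Delta :: 'n rmat)) v =
      (\<Sum>k\<in>UNIV. of_real ((cmod (v $ (k, False) + \<i> * v $ (k, True)))\<^sup>2))" for v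
    unfolding herm_form_eq_sum sum_UNIV_prod_bool[of "\<lambda>i. cnj (v $ i) * _ i"] cplx_vacuum_mult
    by (intro sum.cong refl) (simp only: complex_norm_square, simp add: algebra_simps)
  then show ?thesis
    unfolding psd_c_iff_herm_form by (simp add: sum_nonneg del: of_real_power)
qed

definition outer_prod :: "real ^ 'm \<Rightarrow> real ^ 'm ^ 'm" where
  "outer_prod w = (\<chi> i j. w $ i * w $ j)"

lemma psd_c_outer_prod: "psd_c (cplx (outer_prod w) 0)"
proof -
  have "herm_form (cplx (outer_prod w) 0) v = of_real ((cmod (\<Sum>j\<in>UNIV. of_real (w $ j) * v $ j))\<^sup>2)"
    for v
  proof -
    let ?s = "\<Sum>j\<in>UNIV. of_real (w $ j) * v $ j"
    have "herm_form (cplx (outer_prod w) 0) v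
        = (\<Sum>i\<in>UNIV. \<Sum>j\<in>UNIV. cnj (of_real (w $ i) * v $ i) * (of_real (w $ j) * v $ j))"
      unfolding herm_form_def by (intro sum.cong refl) (simp add: cplx_def outer_prod_def Complex_eq mult_ac)
    also have "\<dots> = cnj ?s * ?s"
      by (simp only: cnj_sum sum_product)
    finally show ?thesis by (simp only: complex_norm_square mult.commute)
  qed
  then show ?thesis
    unfolding psd_c_iff_herm_form by (simp del: of_real_power)
qed

lemma outer_prod_congruence:
  "(A ** outer_prod w ** transpose A) $ a $ b = (A *v w) $ a * (A *v w) $ b"
  by (simp add: matrix_congruence_entry outer_prod_def matrix_vector_mult_def sum_product mult_ac)

definition quad_sign :: "'n \<times> bool \<Rightarrow> real" where
  "quad_sign i = (if snd i then -1 else 1)"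

lemma Sigma_mult_entry: "((Sigma :: 'n::finite rmat) ** X) $ i $ j = quad_sign i * X $ i $ j"
  by (simp add: matrix_matrix_mult_def Sigma_def quad_sign_def if_zero_mult split del: if_split)

lemma mult_Sigma_entry: "(X ** (Sigma :: 'n::finite rmat)) $ i $ j = X $ i $ j * quad_sign j"
  by (simp add: matrix_matrix_mult_def Sigma_def quad_sign_def mult_if_zero split del: if_split)

lemma transpose_Sigma: "transpose (Sigma :: 'n::finite rmat) = Sigma"
  by (auto simp: transpose_def Sigma_def vec_eq_iff)

lemma Sigma_Delta_Sigma: "(Sigma :: 'n::finite rmat) ** Delta ** Sigma = - Delta"
  by (simp add: vec_eq_iff Sigma_mult_entry mult_Sigma_entry)
    (auto simp: Delta_def quad_sign_def)

lemma gaussian_state_apply_ch: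
  assumes "gchannel \<phi>" and "gaussian_state \<rho>"
  shows "gaussian_state (apply_ch \<phi> \<rho>)"
proof -
  obtain T N d where \<phi>: "\<phi> = (T, N, d)" by (cases \<phi>) auto
  obtain d0 \<nu> where \<rho>: "\<rho> = (d0, \<nu>)" by (cases \<rho>) auto
  have N: "transpose N = N" "psd_c (cplx N (Delta - T ** Delta ** transpose T))"
    using assms(1) unfolding \<phi> gchannel_def by auto
  have \<nu>: "transpose \<nu> = \<nu>" "psd_c (cplx \<nu> Delta)"
    using assms(2) unfolding \<rho> gaussian_state_def by auto
  have "psd_c (cplx (T ** \<nu> ** transpose T + N)
      (T ** Delta ** transpose T + (Delta - T ** Delta ** transpose T)))"
    by (rule psd_c_cplx_add[OF psd_c_cplx_congruence[OF \<nu>(2)] N(2)])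
  moreover have "transpose (T ** \<nu> ** transpose T + N) = T ** \<nu> ** transpose T + N"
    by (simp add: transpose_add matrix_transpose_mul N(1) \<nu>(1) matrix_mul_assoc)
  ultimately show ?thesis
    unfolding \<phi> \<rho> apply_ch_def gaussian_state_def by simp
qed

lemma gaussian_state_vacuum: "gaussian_state (x, mat 1 :: 'n::finite rmat)"
  by (simp add: gaussian_state_def psd_c_vacuum)

lemma real_gstate_vacuum: "(\<And>k. x $ (k, True) = 0) \<Longrightarrow> real_gstate (x, mat 1 :: 'n::finite rmat)"
  by (simp add: real_gstate_def mat_def)

lemma apply_ch_apply_super:
  "apply_ch (apply_super (A, Or, Y, db) \<phi>) \<rho> =
     apply_ch (A, Y, db) (apply_ch \<phi> (apply_ch (Sigma ** transpose Or ** Sigma, 0, 0) \<rho>))"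
  by (cases \<phi>, cases \<rho>) (simp add: apply_ch_def apply_super_def matrix_mul_assoc
      matrix_transpose_mul matrix_vector_mul_assoc matrix_vector_right_distrib
      matrix_add_ldistrib matrix_add_rdistrib add.assoc)

lemma gsuperchannel_post_gchannel:
  assumes "gsuperchannel (A, Or, Y, db)"
  shows "gchannel (A, Y, db)"
  using assms psd_r_if_psd_c_cplx unfolding gsuperchannel_def gchannel_def by auto

lemma gsuperchannel_pre_gchannel:
  assumes "gsuperchannel (A, Or, Y, db)"
  shows "gchannel ((Sigma :: 'n::finite rmat) ** transpose Or ** Sigma, 0, 0)"
proof -
  have "Or ** transpose Or = mat 1" and K: "psd_c (cplx 0 (Delta - Or ** Delta ** transpose Or))"
    using assms unfolding gsuperchannel_def by auto
  then have "transpose Or ** Or = mat 1"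
    using matrix_left_right_inverse by blast
  then have OtO: "X ** transpose Or ** Or = X" for X :: "'n rmat"
    by (simp flip: matrix_mul_assoc)
  define M where "M = (Sigma :: 'n rmat) ** transpose Or"
  have tM: "transpose M = Or ** Sigma"
    by (simp add: M_def matrix_transpose_mul transpose_Sigma)
  have "M ** (Or ** Delta ** transpose Or) ** transpose M = Sigma ** Delta ** Sigma"
    unfolding tM by (simp add: M_def matrix_mul_assoc OtO)
  moreover have "(Sigma ** transpose Or ** Sigma) ** Delta ** transpose (Sigma ** transpose Or ** Sigma)
      = Sigma ** transpose Or ** (Sigma ** Delta ** Sigma) ** Or ** Sigma"
    by (simp add: matrix_transpose_mul transpose_Sigma matrix_mul_assoc)
  moreover have "M ** Delta ** transpose M = Sigma ** transpose Or ** Delta ** Or ** Sigma"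
    unfolding tM by (simp add: M_def matrix_mul_assoc)
  ultimately have "M ** (Delta - Or ** Delta ** transpose Or) ** transpose M
      = Delta - (Sigma ** transpose Or ** Sigma) ** Delta ** transpose (Sigma ** transpose Or ** Sigma)"
    unfolding matrix_diff_ldistrib matrix_diff_rdistrib Sigma_Delta_Sigma
    by (simp add: matrix_mul_assoc matrix_mul_lneg matrix_mul_rneg)
  with psd_c_cplx_congruence[OF K, of M] show ?thesis
    unfolding gchannel_def psd_r_def by simp
qed

definition block_diagonal :: "'n::finite rmat \<Rightarrow> bool" where
  "block_diagonal T \<longleftrightarrow> (\<forall>k l. T $ (k, False) $ (l, True) = 0 \<and> T $ (k, True) $ (l, False) = 0)"

lemma block_diagonal_Sigma_transpose_Sigma:
  "block_diagonal Or \<Longrightarrow> block_diagonal ((Sigma :: 'n::finite rmat) ** transpose Or ** Sigma)"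
  by (simp add: block_diagonal_def Sigma_mult_entry mult_Sigma_entry transpose_def)

lemma real_gstate_apply_ch_if_momentum_rows_zero:
  assumes "\<And>k i. T $ (k, True) $ i = 0" and "\<And>k. d $ (k, True) = 0"
    and "\<And>k l. N $ (k, False) $ (l, True) = 0"
  shows "real_gstate (apply_ch (T, N, d) \<rho>)"
  using assms by (cases \<rho>)
    (simp add: apply_ch_def real_gstate_def matrix_vector_mult_def matrix_congruence_entry)

lemma real_gchannel_if_block_diagonal:
  fixes T N :: "'n::finite rmat"
  assumes "gchannel (T, N, d)" and "block_diagonal T" and "\<And>k. d $ (k, True) = 0"
    and "\<And>k l. N $ (k, False) $ (l, True) = 0"
  shows "real_gchannel (T, N, d)"
  unfolding real_gchannel_def
proof (intro conjI allI impI assms(1))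
  fix \<rho> :: "'n gstate"
  assume "gaussian_state \<rho> \<and> real_gstate \<rho>"
  then obtain d0 \<nu> where \<rho>: "\<rho> = (d0, \<nu>)" and "\<And>k. d0 $ (k, True) = 0"
    and "\<And>k l. \<nu> $ (k, False) $ (l, True) = 0"
    by (cases \<rho>) (auto simp: real_gstate_def)
  with assms(2-4) show "real_gstate (apply_ch (T, N, d) \<rho>)"
    by (simp add: apply_ch_def real_gstate_def block_diagonal_def matrix_vector_mult_def
        matrix_congruence_entry sum_UNIV_prod_bool)
qed

lemma real_gchannel_momentum_noise:
  assumes "\<And>k. w $ (k, False) = 0" and "\<And>k. x $ (k, True) = 0"
  shows "real_gchannel (0 :: 'n::finite rmat, mat 1 + outer_prod w, x)"
proof (rule real_gchannel_if_block_diagonal)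
  have psd: "psd_c (cplx (mat 1 + outer_prod w) (Delta + 0))"
    by (rule psd_c_cplx_add[OF psd_c_vacuum psd_c_outer_prod])
  moreover have "transpose (mat 1 + outer_prod w) = mat 1 + outer_prod w"
    by (simp add: transpose_add) (simp add: transpose_def outer_prod_def vec_eq_iff mult.commute)
  ultimately show "gchannel (0 :: 'n rmat, mat 1 + outer_prod w, x)"
    using psd_r_if_psd_c_cplx[OF psd] by (simp add: gchannel_def)
qed (use assms in \<open>simp_all add: block_diagonal_def mat_def outer_prod_def\<close>)

definition matrix_unit :: "'m \<Rightarrow> 'm \<Rightarrow> real ^ 'm ^ 'm" where
  "matrix_unit i j = (\<chi> a b. if a = i \<and> b = j then 1 else 0)"

lemma matrix_unit_sandwich_entry:
  "(A ** matrix_unit i j ** M) $ a $ b = A $ a $ i * M $ j $ b"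
proof -
  have "(A ** matrix_unit i j) $ a $ k = (if k = j then A $ a $ i else 0)" for k
    by (cases "k = j") (simp_all add: matrix_matrix_mult_def matrix_unit_def mult_if_zero)
  then show ?thesis
    by (simp add: matrix_matrix_mult_def[of "A ** matrix_unit i j"] if_zero_mult)
qed

lemma real_gchannel_momentum_unit:
  "real_gchannel (matrix_unit (k, True) (l, True) :: 'n::finite rmat, mat 1, 0)"
proof (rule real_gchannel_if_block_diagonal)
  have "matrix_unit (k, True) (l, True) ** Delta ** transpose (matrix_unit (k, True) (l, True))
      = (0 :: 'n rmat)"
    unfolding vec_eq_iff matrix_congruence_entry
    by (auto intro!: sum.neutral simp: matrix_unit_def Delta_def)
  then show "gchannel (matrix_unit (k, True) (l, True) :: 'n rmat, mat 1, 0)"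
    using psd_c_vacuum psd_r_if_psd_c_cplx[OF psd_c_vacuum] by (simp add: gchannel_def)
qed (simp_all add: block_diagonal_def matrix_unit_def mat_def)

lemma real_gstate_apply_super:
  assumes "real_gsuperchannel \<Phi>" and "real_gchannel \<phi>"
    and "gaussian_state \<rho>" and "real_gstate \<rho>"
  shows "real_gstate (apply_ch (apply_super \<Phi> \<phi>) \<rho>)"
  using assms unfolding real_gsuperchannel_def real_gchannel_def by blast

lemma real_gsuperchannel_noise_test:
  assumes "real_gsuperchannel (A, Or, Y, db)"
    and "\<And>k. w $ (k, False) = 0" and "\<And>k. x $ (k, True) = 0"
  shows "(A *v x + db) $ (k, True) = 0"
    and "(A ** (mat 1 + outer_prod w) ** transpose A + Y) $ (k, False) $ (l, True) = 0"
proof -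
  have "real_gstate (apply_ch (apply_super (A, Or, Y, db) (0, mat 1 + outer_prod w, x)) (0, mat 1))"
    using assms by (intro real_gstate_apply_super real_gchannel_momentum_noise
        gaussian_state_vacuum real_gstate_vacuum) simp_all
  then show "(A *v x + db) $ (k, True) = 0"
    and "(A ** (mat 1 + outer_prod w) ** transpose A + Y) $ (k, False) $ (l, True) = 0"
    by (simp_all add: apply_ch_def apply_super_def real_gstate_def)
qed

lemma real_gsuperchannel_constraints:
  assumes "real_gsuperchannel (A, Or, Y, db)"
  shows real_gsuperchannel_displacement: "db $ (k, True) = 0"
    and real_gsuperchannel_momentum_position: "A $ (k, True) $ (l, False) = 0"
    and real_gsuperchannel_noise: "(A ** transpose A + Y) $ (k, False) $ (l, True) = 0"
    and real_gsuperchannel_cross_terms: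
      "(\<And>k. w $ (k, False) = 0) \<Longrightarrow> (A *v w) $ (k, False) * (A *v w) $ (l, True) = 0"
proof -
  note test = real_gsuperchannel_noise_test[OF assms]
  have outer0: "outer_prod 0 = 0" by (simp add: outer_prod_def vec_eq_iff)
  show db: "db $ (k, True) = 0" using test(1)[of 0 0] by simp
  have "axis (l, False) 1 $ (k', True) = (0 :: real)" for k'
    by (simp add: axis_def)
  then show "A $ (k, True) $ (l, False) = 0"
    using test(1)[of 0 "axis (l, False) 1" k] db by (simp add: matrix_vector_mult_basis column_def)
  show "(A ** transpose A + Y) $ (k, False) $ (l, True) = 0"
    using test(2)[of 0 0] by (simp add: outer0)
  show "(A *v w) $ (k, False) * (A *v w) $ (l, True) = 0" if "\<And>k. w $ (k, False) = 0"
  proof -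
    have "(A ** transpose A) $ (k, False) $ (l, True) + (A *v w) $ (k, False) * (A *v w) $ (l, True)
        + Y $ (k, False) $ (l, True) = 0"
      using test(2)[of w 0 k l] that
      by (simp add: matrix_add_ldistrib matrix_add_rdistrib outer_prod_congruence)
    moreover have "(A ** transpose A) $ (k, False) $ (l, True) + Y $ (k, False) $ (l, True) = 0"
      using test(2)[of 0 0 k l] by (simp add: outer0)
    ultimately show ?thesis by linarith
  qed
qed

lemma real_gsuperchannel_momentum_block:
  fixes A :: "'n::finite rmat"
  assumes "real_gsuperchannel (A, Or, Y, db)" and "A $ (k0, True) $ (l0, True) \<noteq> 0"
  shows "A $ (k, False) $ (l, True) = 0"
proof -
  define u where "u = (\<chi> m. A $ (k, False) $ (m, True))"
  define v where "v = (\<chi> m. A $ (k0, True) $ (m, True))"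
  have "(u \<bullet> w) * (v \<bullet> w) = 0" for w
  proof -
    define w' :: "'n rvec" where "w' = (\<chi> i. if snd i then w $ fst i else 0)"
    have "(A *v w') $ (k, False) * (A *v w') $ (k0, True) = 0"
      by (rule real_gsuperchannel_cross_terms[OF assms(1)]) (simp add: w'_def)
    then show ?thesis
      by (simp add: u_def v_def w'_def inner_vec_def matrix_vector_mult_def sum_UNIV_prod_bool)
  qed
  moreover have "v \<noteq> 0" using assms(2) by (auto simp: v_def vec_eq_iff)
  ultimately have "u = 0" by (rule inner_mult_inner_eq_0_imp_eq_0)
  then show ?thesis by (simp add: u_def vec_eq_iff)
qed

text \<open>The test channel moves the momentum \<open>(l, True)\<close> to \<open>(l0, True)\<close>; after \<open>\<Phi>\<close>, the input
  position \<open>(k, False)\<close> reaches the output momentum \<open>(k0, True)\<close> with weight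
  \<open>- A $ (k0, True) $ (l0, True) * Or $ (k, False) $ (l, True)\<close>.\<close>

lemma real_gsuperchannel_pre_position_momentum:
  assumes "real_gsuperchannel (A, Or, Y, db)" and "A $ (k0, True) $ (l0, True) \<noteq> 0"
  shows "Or $ (k, False) $ (l, True) = 0"
proof -
  have "real_gstate (apply_ch (apply_super (A, Or, Y, db) (matrix_unit (l0, True) (l, True), mat 1, 0))
      (axis (k, False) 1, mat 1))"
    using assms(1) by (intro real_gstate_apply_super real_gchannel_momentum_unit
        gaussian_state_vacuum real_gstate_vacuum) (simp_all add: axis_def)
  then have "((A ** matrix_unit (l0, True) (l, True) ** (Sigma ** transpose Or ** Sigma))
      *v axis (k, False) 1 + db) $ (k0, True) = 0"
    by (simp add: apply_ch_def apply_super_def real_gstate_def matrix_mul_assoc)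
  then have "A $ (k0, True) $ (l0, True) * Or $ (k, False) $ (l, True) = 0"
    by (simp add: matrix_vector_mult_basis column_def matrix_unit_sandwich_entry Sigma_mult_entry
        mult_Sigma_entry transpose_def quad_sign_def real_gsuperchannel_displacement[OF assms(1)])
  with assms(2) show ?thesis by simp
qed

lemma real_gsuperchannel_noise_position_momentum:
  assumes "real_gsuperchannel (A, Or, Y, db)"
  shows "Y $ (k, False) $ (l, True) = 0"
proof -
  have "(A ** transpose A) $ (k, False) $ (l, True) = 0"
  proof (cases "\<exists>k0 l0. A $ (k0, True) $ (l0, True) \<noteq> 0")
    case True
    then obtain k0 l0 where "A $ (k0, True) $ (l0, True) \<noteq> 0" by blast
    then show ?thesis
      using real_gsuperchannel_momentum_block[OF assms]
        real_gsuperchannel_momentum_position[OF assms]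
      by (simp add: matrix_matrix_mult_def transpose_def sum_UNIV_prod_bool)
  next
    case False
    then show ?thesis
      using real_gsuperchannel_momentum_position[OF assms]
      by (simp add: matrix_matrix_mult_def transpose_def sum_UNIV_prod_bool)
  qed
  then show ?thesis using real_gsuperchannel_noise[OF assms, of k l] by simp
qed

lemma real_gsuperchannel_cases:
  assumes "real_gsuperchannel (A, Or, Y, db)"
  obtains (momentum_rows_zero) "\<And>k i. A $ (k, True) $ i = 0"
    | (block_diagonal) "block_diagonal A" and "block_diagonal Or"
proof (cases "\<exists>k0 l0. A $ (k0, True) $ (l0, True) \<noteq> 0")
  case True
  then obtain k0 l0 where kl: "A $ (k0, True) $ (l0, True) \<noteq> 0" by blast
  have "orthogonal_matrix Or"
    using assms unfolding real_gsuperchannel_def gsuperchannel_def orthogonal_matrix_def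
    by (auto simp: matrix_left_right_inverse)
  then have "Or $ (k, True) $ (l, False) = 0" for k l
    by (rule orthogonal_matrix_block_triangular_imp_diagonal[where X = "{i. \<not> snd i}"])
      (auto simp: real_gsuperchannel_pre_position_momentum[OF assms kl])
  then show ?thesis
    using block_diagonal real_gsuperchannel_pre_position_momentum[OF assms kl]
      real_gsuperchannel_momentum_block[OF assms kl] real_gsuperchannel_momentum_position[OF assms]
    unfolding block_diagonal_def by blast
next
  case False
  have "A $ (k, True) $ i = 0" for k i
  proof (cases i)
    case (Pair l b)
    then show ?thesis
      using False real_gsuperchannel_momentum_position[OF assms] by (cases b) auto
  qed
  then show ?thesis by (rule momentum_rows_zero)
qed

lemma imaginarity_measure_nonneg:
  "imaginarity_measure IG \<Longrightarrow> gaussian_state \<rho> \<Longrightarrow> 0 \<le> IG \<rho>"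
  unfolding imaginarity_measure_def by blast

lemma imaginarity_measure_eq_0_iff:
  "imaginarity_measure IG \<Longrightarrow> gaussian_state \<rho> \<Longrightarrow> IG \<rho> = 0 \<longleftrightarrow> real_gstate \<rho>"
  unfolding imaginarity_measure_def by blast

lemma imaginarity_measure_mono:
  "imaginarity_measure IG \<Longrightarrow> real_gchannel \<phi> \<Longrightarrow> gaussian_state \<rho> \<Longrightarrow> IG (apply_ch \<phi> \<rho>) \<le> IG \<rho>"
  unfolding imaginarity_measure_def by blast

lemma IGC_s_upper:
  "gaussian_state \<rho> \<Longrightarrow> real_gstate \<rho> \<Longrightarrow> ereal (IG (apply_ch \<phi> \<rho>)) \<le> IGC_s IG \<phi>"
  unfolding IGC_s_def by (rule SUP_upper) simp

lemma IGC_s_nonneg: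
  fixes IG :: "'n::finite gstate \<Rightarrow> real"
  assumes "imaginarity_measure IG" and "gchannel \<phi>"
  shows "0 \<le> IGC_s IG \<phi>"
proof -
  have "0 \<le> ereal (IG (apply_ch \<phi> (0, mat 1)))"
    using assms by (simp add: imaginarity_measure_nonneg gaussian_state_apply_ch gaussian_state_vacuum)
  also have "\<dots> \<le> IGC_s IG \<phi>"
    by (intro IGC_s_upper gaussian_state_vacuum real_gstate_vacuum) simp
  finally show ?thesis .
qed

lemma IGC_s_eq_0_iff:
  fixes IG :: "'n::finite gstate \<Rightarrow> real"
  assumes IG: "imaginarity_measure IG" and "gchannel \<phi>"
  shows "IGC_s IG \<phi> = 0 \<longleftrightarrow> real_gchannel \<phi>"
proof -
  have "IGC_s IG \<phi> = 0 \<longleftrightarrow> IGC_s IG \<phi> \<le> 0"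
    using IGC_s_nonneg[OF assms] by auto
  also have "\<dots> \<longleftrightarrow> (\<forall>\<rho>. gaussian_state \<rho> \<and> real_gstate \<rho> \<longrightarrow> IG (apply_ch \<phi> \<rho>) \<le> 0)"
    unfolding IGC_s_def SUP_le_iff by (simp add: zero_ereal_def)
  also have "\<dots> \<longleftrightarrow> (\<forall>\<rho>. gaussian_state \<rho> \<and> real_gstate \<rho> \<longrightarrow> real_gstate (apply_ch \<phi> \<rho>))"
  proof -
    have "IG (apply_ch \<phi> \<rho>) \<le> 0 \<longleftrightarrow> real_gstate (apply_ch \<phi> \<rho>)" if "gaussian_state \<rho>" for \<rho>
    proof -
      have "gaussian_state (apply_ch \<phi> \<rho>)"
        using \<open>gchannel \<phi>\<close> that by (rule gaussian_state_apply_ch)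
      then have "0 \<le> IG (apply_ch \<phi> \<rho>)" and "IG (apply_ch \<phi> \<rho>) = 0 \<longleftrightarrow> real_gstate (apply_ch \<phi> \<rho>)"
        by (rule imaginarity_measure_nonneg[OF IG], rule imaginarity_measure_eq_0_iff[OF IG])
      then show ?thesis by (metis order.antisym order.refl)
    qed
    then show ?thesis by auto
  qed
  also have "\<dots> \<longleftrightarrow> real_gchannel \<phi>"
    using \<open>gchannel \<phi>\<close> unfolding real_gchannel_def by blast
  finally show ?thesis .
qed

lemma IGC_s_apply_super_le:
  fixes IG :: "'n::finite gstate \<Rightarrow> real"
  assumes IG: "imaginarity_measure IG" and "real_gsuperchannel \<Phi>" and "gchannel \<phi>"
  shows "IGC_s IG (apply_super \<Phi> \<phi>) \<le> IGC_s IG \<phi>"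
proof -
  obtain A Or Y db where \<Phi>: "\<Phi> = (A, Or, Y, db)" by (cases \<Phi>) auto
  let ?\<phi>\<^sub>1 = "((Sigma :: 'n rmat) ** transpose Or ** Sigma, 0 :: 'n rmat, 0 :: 'n rvec)"
  have real_super: "real_gsuperchannel (A, Or, Y, db)" using assms(2) \<Phi> by simp
  then have super: "gsuperchannel (A, Or, Y, db)" by (simp add: real_gsuperchannel_def)
  have \<phi>\<^sub>1: "gchannel ?\<phi>\<^sub>1" using super by (rule gsuperchannel_pre_gchannel)
  have \<phi>\<^sub>2: "gchannel (A, Y, db)" using super by (rule gsuperchannel_post_gchannel)
  note noise = real_gsuperchannel_noise_position_momentum[OF real_super]
    and displacement = real_gsuperchannel_displacement[OF real_super]
  have "ereal (IG (apply_ch (apply_super \<Phi> \<phi>) \<rho>)) \<le> IGC_s IG \<phi>"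
    if \<rho>: "gaussian_state \<rho>" "real_gstate \<rho>" for \<rho>
  proof -
    let ?X = "apply_ch \<phi> (apply_ch ?\<phi>\<^sub>1 \<rho>)"
    have out: "apply_ch (apply_super \<Phi> \<phi>) \<rho> = apply_ch (A, Y, db) ?X"
      unfolding \<Phi> by (rule apply_ch_apply_super)
    have X: "gaussian_state ?X"
      using \<open>gchannel \<phi>\<close> gaussian_state_apply_ch[OF \<phi>\<^sub>1 \<rho>(1)] by (rule gaussian_state_apply_ch)
    have out_gaussian: "gaussian_state (apply_ch (A, Y, db) ?X)"
      using \<phi>\<^sub>2 X by (rule gaussian_state_apply_ch)
    from real_super show ?thesis
    proof (cases rule: real_gsuperchannel_cases)
      case momentum_rows_zero
      then have "real_gstate (apply_ch (A, Y, db) ?X)"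
        using displacement noise by (rule real_gstate_apply_ch_if_momentum_rows_zero)
      then have "IG (apply_ch (apply_super \<Phi> \<phi>) \<rho>) = 0"
        unfolding out using imaginarity_measure_eq_0_iff[OF IG out_gaussian] by simp
      then show ?thesis using IGC_s_nonneg[OF IG \<open>gchannel \<phi>\<close>] by (simp add: zero_ereal_def)
    next
      case block_diagonal
      have "real_gchannel ?\<phi>\<^sub>1"
        using \<phi>\<^sub>1 block_diagonal_Sigma_transpose_Sigma[OF \<open>block_diagonal Or\<close>]
        by (rule real_gchannel_if_block_diagonal) simp_all
      then have "real_gstate (apply_ch ?\<phi>\<^sub>1 \<rho>)"
        using \<rho> unfolding real_gchannel_def by blast
      have "real_gchannel (A, Y, db)"
        using \<phi>\<^sub>2 \<open>block_diagonal A\<close> displacement noise by (rule real_gchannel_if_block_diagonal)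
      then have "IG (apply_ch (apply_super \<Phi> \<phi>) \<rho>) \<le> IG ?X"
        unfolding out using X by (rule imaginarity_measure_mono[OF IG])
      then have "ereal (IG (apply_ch (apply_super \<Phi> \<phi>) \<rho>)) \<le> ereal (IG ?X)"
        by simp
      also have "\<dots> \<le> IGC_s IG \<phi>"
        using gaussian_state_apply_ch[OF \<phi>\<^sub>1 \<rho>(1)] \<open>real_gstate (apply_ch ?\<phi>\<^sub>1 \<rho>)\<close>
        by (rule IGC_s_upper)
      finally show ?thesis .
    qed
  qed
  then show ?thesis
    unfolding IGC_s_def[of IG "apply_super \<Phi> \<phi>"] by (auto intro: SUP_least)
qed

theorem theorem3:
  fixes IG :: "'n::finite gstate \<Rightarrow> real"
  assumes "imaginarity_measure IG"
  shows "(\<forall>\<phi>. gchannel \<phi> \<longrightarrow>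
            IGC_s IG \<phi> \<ge> 0 \<and> (IGC_s IG \<phi> = 0 \<longleftrightarrow> real_gchannel \<phi>)) \<and>
         (\<forall>\<Phi> \<phi>. real_gsuperchannel \<Phi> \<and> gchannel \<phi> \<longrightarrow>
            IGC_s IG (apply_super \<Phi> \<phi>) \<le> IGC_s IG \<phi>)"
proof (intro conjI allI impI)
  fix \<phi> :: "'n gchan"
  assume "gchannel \<phi>"
  then show "0 \<le> IGC_s IG \<phi>" and "IGC_s IG \<phi> = 0 \<longleftrightarrow> real_gchannel \<phi>"
    by (rule IGC_s_nonneg[OF assms], rule IGC_s_eq_0_iff[OF assms])
next
  fix \<Phi> :: "'n gsuper" and \<phi> :: "'n gchan"
  assume "real_gsuperchannel \<Phi> \<and> gchannel \<phi>"
  then show "IGC_s IG (apply_super \<Phi> \<phi>) \<le> IGC_s IG \<phi>"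
    using IGC_s_apply_super_le[OF assms] by blast
qed

end
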